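(* Let $L>1$ be a constant and $\mathcal S$ a set of relations. Then $|\Join_{S\in\mathcal S}S| = O(\mathrm{IN}^{\mathsf{DBP}(\mathcal S,L)})$.
   Context: A join query consists of a finite set $\mathcal S$ of relations; each $S$ is a finite set of tuples over attribute set $\mathsf{attr}(S)$; $\mathcal A=\bigcup_S\mathsf{attr}(S)$; the join $\Join_{S\in\mathcal S}S$ is the set of tuples $t$ over $\mathcal A$ with $\pi_{\mathsf{attr}(S)}(t)\in S$ for all $S$. $\mathrm{IN}=\sum_S|S|\ge2$, $\log=\log_{\mathrm{IN}}$. For $A\subseteq\mathsf{attr}(S)$, $v\in\pi_A(S)$: $\mathsf{deg}(v,S,A)=|\{t\in S:\pi_A(t)=v\}|$; $d_{S,A}=\max_{v\in\pi_A(S)}\mathsf{deg}(v,S,A)$ for $A\ne\emptyset$, $d_{S,\emptyset}=|S|$. DBP: a cover is a set $C$ of pairs $(S,A)$ with $S\in\mathcal S$, $A\subseteq\mathsf{attr}(S)$, $\bigcup_{(S,A)\in C}A=\mathcal A$. For a cover $C$, $O_{C,L}$ is the optimal value of: minimize $\sum_{a\in\mathcal A}v_a$ over real $v_a\ge0$ subject to $\sum_{a\in A'}v_a\ge\log\big(d_{\pi_A(S),A\setminus A'}/L\big)$ for all $(S,A)\in C$, $A'\subseteq A$. $\mathsf{DBP}(\mathcal S,L)=\min_C O_{C,L}$. $O(\cdot)$ hides factors depending only on the query schema and on $L$. *)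

theory Defs
  imports Main "HOL-Library.Log_Nat" Complex_Main
begin

text \<open>Tuples over an attribute set A are partial maps with domain A.\<close>

type_synonym ('a,'v) tuple = "'a \<rightharpoonup> 'v"

definition all_attrs :: "'r set \<Rightarrow> ('r \<Rightarrow> 'a set) \<Rightarrow> 'a set" where
  "all_attrs Rels attr = (\<Union>r\<in>Rels. attr r)"

definition is_instance :: "'r set \<Rightarrow> ('r \<Rightarrow> 'a set) \<Rightarrow> ('r \<Rightarrow> ('a,'v) tuple set) \<Rightarrow> bool" where
  "is_instance Rels attr R \<longleftrightarrow>
     (\<forall>r\<in>Rels. finite (R r) \<and> (\<forall>t\<in>R r. dom t = attr r))"

definition IN :: "'r set \<Rightarrow> ('r \<Rightarrow> ('a,'v) tuple set) \<Rightarrow> nat" where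
  "IN Rels R = (\<Sum>r\<in>Rels. card (R r))"

definition join :: "'r set \<Rightarrow> ('r \<Rightarrow> 'a set) \<Rightarrow> ('r \<Rightarrow> ('a,'v) tuple set) \<Rightarrow> ('a,'v) tuple set" where
  "join Rels attr R = {t. dom t = all_attrs Rels attr \<and> (\<forall>r\<in>Rels. t |` attr r \<in> R r)}"

definition proj :: "'a set \<Rightarrow> ('a,'v) tuple set \<Rightarrow> ('a,'v) tuple set" where
  "proj A S = (\<lambda>t. t |` A) ` S"

definition deg :: "('a,'v) tuple \<Rightarrow> ('a,'v) tuple set \<Rightarrow> 'a set \<Rightarrow> nat" where
  "deg v S A = card {t\<in>S. t |` A = v}"

text \<open>Maximum degree d_{S,A}; d_{S,{}} = |S|.  For empty S (no values) it is 0.\<close>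
definition maxdeg :: "('a,'v) tuple set \<Rightarrow> 'a set \<Rightarrow> nat" where
  "maxdeg S A = (if A = {} then card S else Max (insert 0 ((\<lambda>v. deg v S A) ` proj A S)))"

definition is_cover :: "'r set \<Rightarrow> ('r \<Rightarrow> 'a set) \<Rightarrow> ('r \<times> 'a set) set \<Rightarrow> bool" where
  "is_cover Rels attr C \<longleftrightarrow>
     (\<forall>(r,A)\<in>C. r \<in> Rels \<and> A \<subseteq> attr r) \<and> (\<Union>(r,A)\<in>C. A) = all_attrs Rels attr"

text \<open>Optimal value O_{C,L} of the linear program (as infimum of feasible objective values;
  the LP is feasible and bounded below by 0).\<close>
definition O_val :: "'r set \<Rightarrow> ('r \<Rightarrow> 'a set) \<Rightarrow> ('r \<Rightarrow> ('a,'v) tuple set)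
    \<Rightarrow> ('r \<times> 'a set) set \<Rightarrow> real \<Rightarrow> real" where
  "O_val Rels attr R C L = Inf {(\<Sum>a\<in>all_attrs Rels attr. x a) | x :: 'a \<Rightarrow> real.
      (\<forall>a\<in>all_attrs Rels attr. x a \<ge> 0) \<and>
      (\<forall>(r,A)\<in>C. \<forall>A'. A' \<subseteq> A \<longrightarrow>
          (\<Sum>a\<in>A'. x a) \<ge> log (real (IN Rels R)) (real (maxdeg (proj A (R r)) (A - A')) / L))}"

definition DBP :: "'r set \<Rightarrow> ('r \<Rightarrow> 'a set) \<Rightarrow> ('r \<Rightarrow> ('a,'v) tuple set) \<Rightarrow> real \<Rightarrow> real" where
  "DBP Rels attr R L = Min {O_val Rels attr R C L | C. is_cover Rels attr C}"

end

theory Submission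
  imports Defs
begin

text \<open>Fix a cover \<open>C\<close> attaining \<open>DBP\<close> and a feasible point \<open>x\<close> of its linear
  program. Adding the pairs \<open>(S, A)\<close> of \<open>C\<close> one at a time, the projection of the join onto the
  attributes covered so far, \<open>U\<close>, grows by a factor of at most the maximum degree of
  \<open>\<pi>\<^sub>A(S)\<close> on \<open>A \<inter> U\<close>: a tuple over \<open>A \<union> U\<close> is determined by its parts over \<open>U\<close> and over \<open>A\<close>,
  and the latter lies in \<open>\<pi>\<^sub>A(S)\<close> and agrees with the former on \<open>A \<inter> U\<close>. The constraint for
  \<open>A' = A - U\<close> bounds this degree by \<open>L \<cdot> IN^(\<Sum>a\<in>A-U. x a)\<close>, so the join has at most
  \<open>L^|C| \<cdot> IN^(\<Sum>a. x a)\<close> tuples. Taking the infimum over \<open>x\<close> gives the claim with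
  the constant \<open>L^|C|\<close>, bounded uniformly because covers are drawn from a finite set.\<close>

definition lp_feasible :: "'r set \<Rightarrow> ('r \<Rightarrow> 'a set) \<Rightarrow> ('r \<Rightarrow> ('a,'v) tuple set)
    \<Rightarrow> ('r \<times> 'a set) set \<Rightarrow> real \<Rightarrow> ('a \<Rightarrow> real) \<Rightarrow> bool" where
  "lp_feasible Rels attr R C L x \<longleftrightarrow>
     (\<forall>a\<in>all_attrs Rels attr. x a \<ge> 0) \<and>
     (\<forall>(r,A)\<in>C. \<forall>A'. A' \<subseteq> A \<longrightarrow>
        (\<Sum>a\<in>A'. x a) \<ge> log (real (IN Rels R)) (real (maxdeg (proj A (R r)) (A - A')) / L))"

lemma O_val_eq_Inf:
  "O_val Rels attr R C L =
     Inf {\<Sum>a\<in>all_attrs Rels attr. x a | x. lp_feasible Rels attr R C L x}"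
  unfolding O_val_def lp_feasible_def by simp

lemma lp_feasible_subset:
  "lp_feasible Rels attr R C L x \<Longrightarrow> C' \<subseteq> C \<Longrightarrow> lp_feasible Rels attr R C' L x"
  unfolding lp_feasible_def by blast

lemma le_mult_powr_of_log_div_le:
  fixes b L s :: real
  assumes "1 < b" "0 < L" "0 \<le> d" "log b (d / L) \<le> s"
  shows "d \<le> L * b powr s"
proof (cases "d = 0")
  case False
  with assms have "d / L \<le> b powr s" by (simp add: log_le_iff)
  with assms show ?thesis by (simp add: field_simps)
qed (use assms in simp)

lemma log_le_of_le_powr:
  fixes b s y :: real
  assumes "1 < b" "0 \<le> s" "0 \<le> y" "y \<le> b powr s"
  shows "log b y \<le> s"
proof (cases "y = 0")
  case False
  then show ?thesis using assms by (simp add: log_le_iff)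
qed (use assms in \<open>simp add: log_def\<close>)

lemma le_mult_powr_Inf:
  fixes b K y :: real and S :: "real set"
  assumes "1 < b" "0 < K" "S \<noteq> {}" and bound: "\<And>s. s \<in> S \<Longrightarrow> y \<le> K * b powr s"
  shows "y \<le> K * b powr Inf S"
proof (cases "0 < y")
  case True
  have "log b (y / K) \<le> Inf S"
  proof (rule cInf_greatest[OF \<open>S \<noteq> {}\<close>])
    fix s assume "s \<in> S"
    then have "y / K \<le> b powr s" using bound assms(2) by (simp add: field_simps)
    then show "log b (y / K) \<le> s" using assms True by (simp add: log_le_iff)
  qed
  then have "y / K \<le> b powr Inf S" using assms True by (simp add: log_le_iff)
  then show ?thesis using assms(2) by (simp add: field_simps)
next
  case False
  moreover have "0 \<le> K * b powr Inf S" using assms(2) by simp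
  ultimately show ?thesis by linarith
qed

lemma deg_le_maxdeg:
  assumes "finite T"
  shows "deg v T D \<le> maxdeg T D"
proof (cases "D = {}")
  case True
  then show ?thesis using assms unfolding maxdeg_def deg_def by (simp add: card_mono)
next
  case False
  show ?thesis
  proof (cases "v \<in> proj D T")
    case True
    then show ?thesis using assms False unfolding maxdeg_def proj_def by simp
  next
    case False
    then have "{t \<in> T. t |` D = v} = {}" unfolding proj_def by auto
    then show ?thesis unfolding deg_def by (simp only: card.empty zero_le)
  qed
qed

lemma maxdeg_le_card:
  assumes "finite T"
  shows "maxdeg T D \<le> card T"
proof -
  have "deg v T D \<le> card T" for v unfolding deg_def using assms by (intro card_mono) auto
  then show ?thesis unfolding maxdeg_def using assms by (auto simp: proj_def)
qed

lemma maxdeg_proj_self: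
  assumes "finite S"
  shows "maxdeg (proj A S) A \<le> 1"
proof (cases "A = {}")
  case True
  have "proj A S \<subseteq> {Map.empty}" using True unfolding proj_def by auto
  then have "card (proj A S) \<le> card {Map.empty :: ('a,'b) tuple}" by (intro card_mono) auto
  then show ?thesis using True unfolding maxdeg_def by simp
next
  case False
  have "deg v (proj A S) A \<le> 1" for v
  proof -
    have "{t \<in> proj A S. t |` A = v} \<subseteq> {v}" unfolding proj_def by auto
    then have "card {t \<in> proj A S. t |` A = v} \<le> card {v}" by (intro card_mono) auto
    then show ?thesis unfolding deg_def by simp
  qed
  then show ?thesis unfolding maxdeg_def using assms False by (auto simp: proj_def)
qed

lemma maxdeg_proj_le_card_power:
  assumes "finite S" "finite A'" "A' \<subseteq> A"
  shows "maxdeg (proj A S) (A - A') \<le> card S ^ card A'"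
proof (cases "A' = {}")
  case True
  then show ?thesis using maxdeg_proj_self[OF assms(1)] by simp
next
  case False
  have "maxdeg (proj A S) (A - A') \<le> card (proj A S)"
    using assms(1) by (intro maxdeg_le_card) (simp add: proj_def)
  also have "\<dots> \<le> card S" unfolding proj_def using assms(1) by (rule card_image_le)
  also have "\<dots> \<le> card S ^ card A'"
    using False assms(2) by (cases "card S") (simp_all add: self_le_power card_gt_0_iff)
  finally show ?thesis .
qed

lemma restrict_map_eq_on_union:
  "m |` A = m' |` A \<Longrightarrow> m |` U = m' |` U \<Longrightarrow> m |` (A \<union> U) = m' |` (A \<union> U)"
  by (auto simp: restrict_map_def fun_eq_iff split: if_splits)

lemma card_proj_union_le:
  fixes J T :: "('a,'v) tuple set"
  assumes "finite T" "proj A J \<subseteq> T" and deg_bound: "\<And>v. deg v T (A \<inter> U) \<le> D"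
  shows "card (proj (A \<union> U) J) \<le> card (proj U J) * D"
proof (cases "finite (proj U J)")
  case False
  have "proj U J = proj U (proj (A \<union> U) J)"
    unfolding proj_def image_image by (simp add: Int_absorb1)
  with False have "infinite (proj (A \<union> U) J)" unfolding proj_def by auto
  then show ?thesis by simp
next
  case True
  define fiber where "fiber p = {\<tau> \<in> T. \<tau> |` (A \<inter> U) = p |` (A \<inter> U)}" for p
  let ?split = "\<lambda>s. (s |` U, s |` A)"
  have inj: "inj_on ?split (proj (A \<union> U) J)"
    by (rule inj_onI) (auto simp: proj_def intro: restrict_map_eq_on_union)
  have split_into: "?split ` proj (A \<union> U) J \<subseteq> Sigma (proj U J) fiber"
  proof (rule image_subsetI)
    fix s assume "s \<in> proj (A \<union> U) J"
    then obtain t where t: "t \<in> J" "s = t |` (A \<union> U)" unfolding proj_def by auto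
    have "s |` U = t |` U" "s |` A = t |` A" by (simp_all add: t Int_absorb1)
    moreover have "t |` A \<in> T" using assms(2) t(1) unfolding proj_def by auto
    moreover have "t |` U |` (A \<inter> U) = t |` A |` (A \<inter> U)"
      by (simp add: Int_absorb1 Int_absorb2 Int_commute)
    ultimately show "?split s \<in> Sigma (proj U J) fiber"
      using t(1) by (auto simp: proj_def fiber_def)
  qed
  have fin_fiber: "finite (fiber p)" for p
    using assms(1) unfolding fiber_def by simp
  have "card (proj (A \<union> U) J) = card (?split ` proj (A \<union> U) J)"
    using inj by (simp add: card_image)
  also have "\<dots> \<le> card (Sigma (proj U J) fiber)"
    using True fin_fiber split_into by (intro card_mono) auto
  also have "\<dots> = (\<Sum>p\<in>proj U J. card (fiber p))"
    using True fin_fiber by simp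
  also have "\<dots> \<le> card (proj U J) * D"
    using sum_bounded_above[of "proj U J" "\<lambda>p. card (fiber p)" D] deg_bound
    unfolding fiber_def deg_def by (simp add: mult.commute)
  finally show ?thesis .
qed

lemma card_proj_join_union_le:
  assumes "is_instance Rels attr R" "r \<in> Rels" "A \<subseteq> attr r"
  shows "card (proj (A \<union> U) (join Rels attr R))
           \<le> card (proj U (join Rels attr R)) * maxdeg (proj A (R r)) (A \<inter> U)"
proof (rule card_proj_union_le)
  show "finite (proj A (R r))" using assms(1,2) unfolding is_instance_def proj_def by simp
  then show "deg v (proj A (R r)) (A \<inter> U) \<le> maxdeg (proj A (R r)) (A \<inter> U)" for v
    by (rule deg_le_maxdeg)
  have "t |` A \<in> proj A (R r)" if "t \<in> join Rels attr R" for t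
  proof -
    have "t |` attr r \<in> R r" using that assms(2) unfolding join_def by simp
    then have "t |` attr r |` A \<in> proj A (R r)" unfolding proj_def by blast
    then show ?thesis using assms(3) by (simp add: Int_absorb1)
  qed
  then show "proj A (join Rels attr R) \<subseteq> proj A (R r)" unfolding proj_def by blast
qed

lemma proj_all_attrs_join: "proj (all_attrs Rels attr) (join Rels attr R) = join Rels attr R"
proof -
  have "t |` all_attrs Rels attr = t" if "t \<in> join Rels attr R" for t
    using that unfolding join_def by (simp add: restrict_map_def fun_eq_iff) (metis domIff)
  then show ?thesis unfolding proj_def by simp
qed

lemma finite_all_attrs:
  "finite Rels \<Longrightarrow> \<forall>r\<in>Rels. finite (attr r) \<Longrightarrow> finite (all_attrs Rels attr)"
  unfolding all_attrs_def by blast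

lemma Union_snd_subset_all_attrs:
  "C \<subseteq> (SIGMA r:Rels. Pow (attr r)) \<Longrightarrow> \<Union>(snd ` C) \<subseteq> all_attrs Rels attr"
  unfolding all_attrs_def by fastforce

lemma card_proj_join_le:
  fixes R :: "'r \<Rightarrow> ('a,'v) tuple set"
  assumes inst: "is_instance Rels attr R" and IN: "1 < real (IN Rels R)" and "0 < L"
    and "finite Rels" "\<forall>r\<in>Rels. finite (attr r)"
    and "finite C" "C \<subseteq> (SIGMA r:Rels. Pow (attr r))" "lp_feasible Rels attr R C L x"
  shows "real (card (proj (\<Union>(snd ` C)) (join Rels attr R)))
           \<le> L ^ card C * real (IN Rels R) powr (\<Sum>a\<in>\<Union>(snd ` C). x a)"
  using \<open>finite C\<close> \<open>C \<subseteq> _\<close> \<open>lp_feasible Rels attr R C L x\<close>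
proof (induction C rule: finite_induct)
  case empty
  have "card (proj {} (join Rels attr R)) \<le> card {Map.empty :: ('a,'v) tuple}"
    by (rule card_mono) (auto simp: proj_def)
  then show ?case using IN by simp
next
  case (insert p C)
  obtain r A where p: "p = (r, A)" by fastforce
  define U where "U = \<Union>(snd ` C)"
  define b where "b = real (IN Rels R)"
  define J where "J = join Rels attr R"
  have rA: "r \<in> Rels" "A \<subseteq> attr r" using insert.prems(1) p by auto
  have "U \<union> A \<subseteq> all_attrs Rels attr"
    using Union_snd_subset_all_attrs[OF insert.prems(1)] p unfolding U_def by auto
  then have fin: "finite U" "finite A"
    using finite_all_attrs[OF assms(4,5)] finite_subset by auto
  have IH: "real (card (proj U J)) \<le> L ^ card C * b powr (\<Sum>a\<in>U. x a)"
    using insert.IH insert.prems lp_feasible_subset[of Rels attr R "insert p C" L x C]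
    unfolding U_def J_def b_def by blast
  have "log b (real (maxdeg (proj A (R r)) (A - (A - U))) / L) \<le> (\<Sum>a\<in>A - U. x a)"
    using insert.prems(2) p unfolding lp_feasible_def b_def by auto
  moreover have "A - (A - U) = A \<inter> U" by blast
  ultimately have degree: "real (maxdeg (proj A (R r)) (A \<inter> U)) \<le> L * b powr (\<Sum>a\<in>A - U. x a)"
    using le_mult_powr_of_log_div_le IN \<open>0 < L\<close> unfolding b_def by simp
  have "real (card (proj (A \<union> U) J)) \<le> real (card (proj U J)) * real (maxdeg (proj A (R r)) (A \<inter> U))"
    using card_proj_join_union_le[OF inst rA, of U] unfolding J_def by (metis of_nat_le_iff of_nat_mult)
  also have "\<dots> \<le> (L ^ card C * b powr (\<Sum>a\<in>U. x a)) * (L * b powr (\<Sum>a\<in>A - U. x a))"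
    using IH degree \<open>0 < L\<close> by (intro mult_mono) auto
  also have "\<dots> = L ^ card (insert p C) * b powr (\<Sum>a\<in>A \<union> U. x a)"
  proof -
    have "(\<Sum>a\<in>A \<union> U. x a) = (\<Sum>a\<in>U. x a) + (\<Sum>a\<in>A - U. x a)"
      using fin sum.union_disjoint[of U "A - U" x] by (simp add: Un_commute)
    then show ?thesis using insert.hyps IN unfolding b_def by (simp add: powr_add)
  qed
  finally show ?case using p unfolding U_def J_def b_def by simp
qed

lemma finite_Sigma_Pow_attr:
  "finite Rels \<Longrightarrow> \<forall>r\<in>Rels. finite (attr r) \<Longrightarrow> finite (SIGMA r:Rels. Pow (attr r))"
  by auto

lemma cover_subset_Sigma_Pow_attr:
  "is_cover Rels attr C \<Longrightarrow> C \<subseteq> (SIGMA r:Rels. Pow (attr r))"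
  unfolding is_cover_def by auto

lemma Union_snd_cover:
  "is_cover Rels attr C \<Longrightarrow> \<Union>(snd ` C) = all_attrs Rels attr"
  unfolding is_cover_def by (simp add: case_prod_beta')

lemma DBP_attained:
  assumes "finite Rels" "\<forall>r\<in>Rels. finite (attr r)"
  obtains C where "is_cover Rels attr C" "DBP Rels attr R L = O_val Rels attr R C L"
proof -
  have "{C. is_cover Rels attr C} \<subseteq> Pow (SIGMA r:Rels. Pow (attr r))"
    using cover_subset_Sigma_Pow_attr by blast
  then have "finite {C. is_cover Rels attr C}"
    using finite_Sigma_Pow_attr[OF assms] finite_subset by blast
  moreover have "is_cover Rels attr ((\<lambda>r. (r, attr r)) ` Rels)"
    unfolding is_cover_def all_attrs_def by auto
  ultimately have "DBP Rels attr R L \<in> {O_val Rels attr R C L | C. is_cover Rels attr C}"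
    unfolding DBP_def by (intro Min_in) auto
  then show ?thesis using that by blast
qed

lemma card_join_le_of_lp_feasible:
  fixes R :: "'r \<Rightarrow> ('a,'v) tuple set"
  assumes "is_instance Rels attr R" "1 < real (IN Rels R)" "0 < L"
    and "finite Rels" "\<forall>r\<in>Rels. finite (attr r)"
    and "is_cover Rels attr C" "lp_feasible Rels attr R C L x"
  shows "real (card (join Rels attr R))
           \<le> L ^ card C * real (IN Rels R) powr (\<Sum>a\<in>all_attrs Rels attr. x a)"
proof -
  have C: "C \<subseteq> (SIGMA r:Rels. Pow (attr r))"
    using assms(6) by (rule cover_subset_Sigma_Pow_attr)
  then have "finite C"
    using finite_Sigma_Pow_attr[OF assms(4,5)] finite_subset by blast
  from card_proj_join_le[OF assms(1-5) this C assms(7)]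
  show ?thesis unfolding Union_snd_cover[OF assms(6)] proj_all_attrs_join .
qed

lemma lp_feasible_one:
  fixes R :: "'r \<Rightarrow> ('a,'v) tuple set"
  assumes inst: "is_instance Rels attr R" and IN: "1 < real (IN Rels R)" and "1 \<le> L"
    and "finite Rels" "\<forall>r\<in>Rels. finite (attr r)" "C \<subseteq> (SIGMA r:Rels. Pow (attr r))"
  shows "lp_feasible Rels attr R C L (\<lambda>_. 1)"
proof -
  have "log (real (IN Rels R)) (real (maxdeg (proj A (R r)) (A - A')) / L) \<le> real (card A')"
    if "(r, A) \<in> C" "A' \<subseteq> A" for r A A'
  proof -
    have r: "r \<in> Rels" "A \<subseteq> attr r" using that(1) assms(6) by auto
    have "finite (R r)" using inst r(1) unfolding is_instance_def by blast
    moreover have "finite A'" using assms(5) r that(2) by (meson finite_subset)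
    ultimately have "maxdeg (proj A (R r)) (A - A') \<le> card (R r) ^ card A'"
      using that(2) by (rule maxdeg_proj_le_card_power)
    also have "\<dots> \<le> IN Rels R ^ card A'"
      unfolding IN_def using r(1) assms(4) by (intro power_mono member_le_sum) auto
    finally have "real (maxdeg (proj A (R r)) (A - A')) \<le> real (IN Rels R) powr real (card A')"
      using IN by (simp add: powr_realpow)
    moreover have "real d / L \<le> real d" for d :: nat
      using mult_right_mono[of 1 L "real d"] \<open>1 \<le> L\<close> by (simp add: divide_le_eq mult.commute)
    ultimately have "real (maxdeg (proj A (R r)) (A - A')) / L \<le> real (IN Rels R) powr real (card A')"
      by (meson order_trans)
    then show ?thesis using IN \<open>1 \<le> L\<close> by (intro log_le_of_le_powr) auto
  qed
  then show ?thesis unfolding lp_feasible_def by auto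
qed

theorem proposition5p1:
  fixes Rels :: "'r set" and attr :: "'r \<Rightarrow> 'a set" and L :: real
  assumes "finite Rels" and "\<forall>r\<in>Rels. finite (attr r)" and "L > 1"
  shows "\<exists>c::real. \<forall>R :: 'r \<Rightarrow> ('a,'v) tuple set.
           is_instance Rels attr R \<and> IN Rels R \<ge> 2 \<longrightarrow>
           real (card (join Rels attr R)) \<le> c * real (IN Rels R) powr DBP Rels attr R L"
proof (intro exI allI impI)
  let ?Sig = "SIGMA r:Rels. Pow (attr r)"
  fix R :: "'r \<Rightarrow> ('a,'v) tuple set"
  assume "is_instance Rels attr R \<and> IN Rels R \<ge> 2"
  then have inst: "is_instance Rels attr R" and IN: "1 < real (IN Rels R)" by auto
  obtain C where C: "is_cover Rels attr C" and DBP: "DBP Rels attr R L = O_val Rels attr R C L"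
    using DBP_attained[OF assms(1,2)] by blast
  have "L ^ card C \<le> L ^ card ?Sig"
    using assms(3) card_mono[OF finite_Sigma_Pow_attr[OF assms(1,2)] cover_subset_Sigma_Pow_attr[OF C]]
    by (intro power_increasing) auto
  then have bound: "real (card (join Rels attr R))
      \<le> L ^ card ?Sig * real (IN Rels R) powr (\<Sum>a\<in>all_attrs Rels attr. x a)"
    if "lp_feasible Rels attr R C L x" for x
    using card_join_le_of_lp_feasible[OF inst IN _ assms(1,2) C that] assms(3)
    by (smt (verit) mult_right_mono powr_ge_zero)
  have "lp_feasible Rels attr R C L (\<lambda>_. 1)"
    using lp_feasible_one[OF inst IN _ assms(1,2) cover_subset_Sigma_Pow_attr[OF C]] assms(3) by simp
  then show "real (card (join Rels attr R)) \<le> L ^ card ?Sig * real (IN Rels R) powr DBP Rels attr R L"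
    unfolding DBP O_val_eq_Inf using IN assms(3) bound by (intro le_mult_powr_Inf) auto
qed

end
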